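(* For every $n\in\mathbb{N}$, the operator $W_n$ on $H^2$ is not Li-Yorke chaotic.
   Context: $H^2$ denotes the Hardy space of analytic functions $f(z)=\sum_{k\ge0}\hat f(k)z^k$ on the open unit disk with $\sum_{k}|\hat f(k)|^2<\infty$. For $n\in\mathbb{N}$, $W_n$ is the bounded operator on $H^2$ given by $W_nf(z)=(1+z+\cdots+z^{n-1})f(z^n)$ (so $W_1$ is the identity and $W_mW_n=W_{mn}$). An operator $T$ on a Banach space $Y$ is Li-Yorke chaotic if there is an uncountable set $S\subseteq Y$ such that for all distinct $x,y\in S$, $\liminf_{k\to\infty}\|T^kx-T^ky\|=0$ and $\limsup_{k\to\infty}\|T^kx-T^ky\|=\infty$. *)

theory Defs
  imports "HOL-Complex_Analysis.Complex_Analysis"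
begin

definition h2_coeff :: "(complex \<Rightarrow> complex) \<Rightarrow> nat \<Rightarrow> complex" where
  "h2_coeff f k = (deriv ^^ k) f 0 / of_nat (fact k)"

text \<open>The Hardy space H^2: analytic functions on the open unit disk with square-summable
  Taylor coefficients (normalised to be 0 outside the disk, so that each element of H^2
  has exactly one representative).\<close>
definition H2 :: "(complex \<Rightarrow> complex) set" where
  "H2 = {f. f holomorphic_on ball 0 1 \<and> (\<forall>z. z \<notin> ball 0 1 \<longrightarrow> f z = 0)
           \<and> summable (\<lambda>k. (cmod (h2_coeff f k))\<^sup>2)}"

definition h2_norm :: "(complex \<Rightarrow> complex) \<Rightarrow> real" where
  "h2_norm f = sqrt (\<Sum>k. (cmod (h2_coeff f k))\<^sup>2)"

definition W :: "nat \<Rightarrow> (complex \<Rightarrow> complex) \<Rightarrow> (complex \<Rightarrow> complex)" where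
  "W n f = (\<lambda>z. (\<Sum>j<n. z ^ j) * f (z ^ n))"

definition li_yorke_chaotic :: "'a::minus set \<Rightarrow> ('a \<Rightarrow> real) \<Rightarrow> ('a \<Rightarrow> 'a) \<Rightarrow> bool" where
  "li_yorke_chaotic Y nrm T \<longleftrightarrow>
     (\<exists>S. S \<subseteq> Y \<and> uncountable S \<and>
        (\<forall>x\<in>S. \<forall>y\<in>S. x \<noteq> y \<longrightarrow>
           liminf (\<lambda>k. ereal (nrm ((T ^^ k) x - (T ^^ k) y))) = 0 \<and>
           limsup (\<lambda>k. ereal (nrm ((T ^^ k) x - (T ^^ k) y))) = \<infinity>))"

end

theory Submission
  imports Defs
begin

(* On Taylor coefficients W_n repeats every coefficient n times: the k-th coefficient of
   W_n f is the (k div n)-th coefficient of f. Hence W_n is linear with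
   ||W_n f|| = sqrt n * ||f||, so for any x, y the distances ||W_n^k x - W_n^k y|| form a
   nondecreasing sequence in k. A monotone sequence converges in the extended reals, so its
   liminf and limsup coincide and cannot be 0 and infinity. *)

lemma Liminf_eq_Limsup_incseq:
  fixes X :: "nat \<Rightarrow> 'a::{complete_linorder,linorder_topology}"
  assumes "incseq X"
  shows "liminf X = limsup X"
  using lim_imp_Liminf[OF _ LIMSEQ_SUP[OF assms]] lim_imp_Limsup[OF _ LIMSEQ_SUP[OF assms]] by simp

lemma uncountable_obtain_two:
  assumes "uncountable S"
  obtains x y where "x \<in> S" "y \<in> S" "x \<noteq> y"
proof -
  obtain x where "x \<in> S" using assms by fastforce
  moreover obtain y where "y \<in> S" "y \<noteq> x"
    using assms countable_finite[of "{x}"] countable_subset[of S "{x}"] by blast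
  ultimately show thesis using that by blast
qed

lemma expansive_not_li_yorke_chaotic:
  fixes T :: "'a::minus \<Rightarrow> 'a"
  assumes diff_closed: "\<And>x y. x \<in> Y \<Longrightarrow> y \<in> Y \<Longrightarrow> x - y \<in> Y"
    and maps_into: "\<And>x. x \<in> Y \<Longrightarrow> T x \<in> Y"
    and T_diff: "\<And>x y. x \<in> Y \<Longrightarrow> y \<in> Y \<Longrightarrow> T (x - y) = T x - T y"
    and expansive: "\<And>x. x \<in> Y \<Longrightarrow> nrm x \<le> nrm (T x)"
  shows "\<not> li_yorke_chaotic Y nrm T"
proof
  assume "li_yorke_chaotic Y nrm T"
  then obtain S where "S \<subseteq> Y" "uncountable S" and S_pairs:
    "\<And>x y. x \<in> S \<Longrightarrow> y \<in> S \<Longrightarrow> x \<noteq> y \<Longrightarrow>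
       liminf (\<lambda>k. ereal (nrm ((T ^^ k) x - (T ^^ k) y))) = 0 \<and>
       limsup (\<lambda>k. ereal (nrm ((T ^^ k) x - (T ^^ k) y))) = \<infinity>"
    unfolding li_yorke_chaotic_def by blast
  then obtain x y where xy: "x \<in> S" "y \<in> S" "x \<noteq> y" and "x \<in> Y" "y \<in> Y"
    by (metis subsetD uncountable_obtain_two)
  have iterate_in: "(T ^^ k) z \<in> Y" if "z \<in> Y" for k z
    using that by (induction k) (simp_all add: maps_into)
  have iterate_diff: "(T ^^ k) x - (T ^^ k) y = (T ^^ k) (x - y)" for k
  proof (induction k)
    case (Suc k)
    then show ?case
      by (simp add: T_diff[symmetric] iterate_in \<open>x \<in> Y\<close> \<open>y \<in> Y\<close>)
  qed simp
  have "incseq (\<lambda>k. ereal (nrm ((T ^^ k) x - (T ^^ k) y)))"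
    unfolding iterate_diff
    by (intro incseq_SucI) (simp add: expansive iterate_in diff_closed \<open>x \<in> Y\<close> \<open>y \<in> Y\<close>)
  then show False
    using S_pairs[OF xy] Liminf_eq_Limsup_incseq by fastforce
qed

lemma div_eq_of_mem_block:
  fixes n :: nat
  assumes "i \<in> {m * n..<m * n + n}"
  shows "i div n = m"
  using assms by (auto intro: div_nat_eqI simp: algebra_simps)

lemma sum_block_div:
  fixes a :: "nat \<Rightarrow> 'a::semiring_1"
  shows "(\<Sum>i\<in>{m * n..<m * n + n}. a (i div n)) = of_nat n * a m"
proof -
  have "(\<Sum>i\<in>{m * n..<m * n + n}. a (i div n)) = (\<Sum>i\<in>{m * n..<m * n + n}. a m)"
    by (intro sum.cong) (simp_all add: div_eq_of_mem_block)
  then show ?thesis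
    by simp
qed

lemma sums_div_nat:
  fixes a :: "nat \<Rightarrow> real"
  assumes "0 < n" and nonneg: "\<And>m. 0 \<le> a m" and "a sums s"
  shows "(\<lambda>i. a (i div n)) sums (of_nat n * s)"
proof -
  have summable_stretched: "summable (\<lambda>i. a (i div n))"
  proof (rule summableI_nonneg_bounded)
    fix N
    have "(\<Sum>i<N. a (i div n)) \<le> (\<Sum>i<N * n. a (i div n))"
      using \<open>0 < n\<close> by (intro sum_mono2) (auto simp: nonneg)
    also have "\<dots> = of_nat n * (\<Sum>m<N. a m)"
      by (simp add: sum.nat_group[symmetric] sum_block_div sum_distrib_left)
    also have "\<dots> \<le> of_nat n * s"
      using \<open>a sums s\<close> nonneg by (auto intro!: mult_left_mono sum_le_suminf simp: sums_iff)
    finally show "(\<Sum>i<N. a (i div n)) \<le> of_nat n * s" .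
  qed (simp add: nonneg)
  have "(\<lambda>m. of_nat n * a m) sums (\<Sum>i. a (i div n))"
    using sums_group[OF summable_sums[OF summable_stretched] \<open>0 < n\<close>] by (simp add: sum_block_div)
  moreover have "(\<lambda>m. of_nat n * a m) sums (of_nat n * s)"
    using \<open>a sums s\<close> by (rule sums_mult)
  ultimately show ?thesis
    using summable_stretched by (metis sums_unique2 summable_sums)
qed

lemma summable_norm_mult_geometric:
  fixes d :: "nat \<Rightarrow> 'a::real_normed_div_algebra"
  assumes "summable (\<lambda>k. (norm (d k))\<^sup>2)" and "norm u < 1"
  shows "summable (\<lambda>k. norm (d k * u ^ k))"
proof (rule summable_comparison_test)
  show "summable (\<lambda>k. (norm (d k))\<^sup>2 + (norm u ^ 2) ^ k)"
    using assms by (auto intro!: summable_add summable_geometric simp: power_less_one_iff)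
  have "norm (d k) * norm u ^ k \<le> (norm (d k))\<^sup>2 + (norm u ^ 2) ^ k" for k
  proof -
    have "2 * norm (d k) * norm u ^ k \<le> (norm (d k))\<^sup>2 + (norm u ^ k)\<^sup>2"
      by (rule sum_squares_bound)
    moreover have "(norm u ^ k)\<^sup>2 = (norm u ^ 2) ^ k"
      by (simp add: power_mult[symmetric] mult.commute)
    moreover have "0 \<le> norm (d k) * norm u ^ k"
      by simp
    ultimately show ?thesis
      by linarith
  qed
  then show "\<exists>N. \<forall>k\<ge>N. norm (norm (d k * u ^ k)) \<le> (norm (d k))\<^sup>2 + (norm u ^ 2) ^ k"
    by (simp add: norm_mult norm_power)
qed

lemma sums_power_series_div:
  fixes c :: "nat \<Rightarrow> 'a::real_normed_field"
  assumes "0 < n" and "(\<lambda>m. c m * (u ^ n) ^ m) sums s"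
    and "summable (\<lambda>k. c (k div n) * u ^ k)"
  shows "(\<lambda>k. c (k div n) * u ^ k) sums ((\<Sum>j<n. u ^ j) * s)"
proof -
  have block: "(\<Sum>k\<in>{m * n..<m * n + n}. c (k div n) * u ^ k) = c m * (u ^ n) ^ m * (\<Sum>j<n. u ^ j)"
    for m
  proof -
    have "(\<Sum>k\<in>{m * n..<m * n + n}. c (k div n) * u ^ k) = (\<Sum>j<n. c ((m * n + j) div n) * u ^ (m * n + j))"
      by (simp add: sum.atLeastLessThan_shift_0 atLeast0LessThan)
    also have "\<dots> = (\<Sum>j<n. c m * (u ^ n) ^ m * u ^ j)"
      using \<open>0 < n\<close> by (intro sum.cong) (simp_all add: power_add power_mult[symmetric] mult.commute)
    finally show ?thesis
      by (simp add: sum_distrib_left)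
  qed
  have "(\<lambda>m. c m * (u ^ n) ^ m * (\<Sum>j<n. u ^ j)) sums (\<Sum>k. c (k div n) * u ^ k)"
    using sums_group[OF summable_sums[OF assms(3)] \<open>0 < n\<close>] by (simp add: block)
  moreover have "(\<lambda>m. c m * (u ^ n) ^ m * (\<Sum>j<n. u ^ j)) sums (s * (\<Sum>j<n. u ^ j))"
    using assms(2) by (rule sums_mult2)
  ultimately show ?thesis
    using assms(3) by (metis mult.commute sums_unique2 summable_sums)
qed

lemma H2_summable_coeff_square:
  "f \<in> H2 \<Longrightarrow> summable (\<lambda>k. (cmod (h2_coeff f k))\<^sup>2)"
  by (simp add: H2_def)

lemma h2_norm_nonneg: "f \<in> H2 \<Longrightarrow> 0 \<le> h2_norm f"
  by (simp add: h2_norm_def H2_def suminf_nonneg)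

lemma H2_power_series:
  assumes "f \<in> H2" and "norm w < 1"
  shows "(\<lambda>k. h2_coeff f k * w ^ k) sums f w"
  using holomorphic_power_series[of f 0 1 w] assms by (simp add: H2_def h2_coeff_def)

lemma H2_diff:
  assumes f: "f \<in> H2" and g: "g \<in> H2"
  shows "f - g \<in> H2"
proof -
  have hf: "f holomorphic_on ball 0 1" and hg: "g holomorphic_on ball 0 1"
    using f g by (auto simp: H2_def)
  have coeff_diff: "h2_coeff (f - g) k = h2_coeff f k - h2_coeff g k" for k
    using higher_deriv_diff[OF hf hg, of 0 k]
    by (simp add: h2_coeff_def fun_diff_def diff_divide_distrib)
  have bound: "(cmod (a - b))\<^sup>2 \<le> 2 * (cmod a)\<^sup>2 + 2 * (cmod b)\<^sup>2" for a b :: complex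
  proof -
    have "(cmod (a - b))\<^sup>2 \<le> (cmod a + cmod b)\<^sup>2"
      by (intro power_mono norm_triangle_ineq4) simp
    also have "\<dots> \<le> 2 * (cmod a)\<^sup>2 + 2 * (cmod b)\<^sup>2"
      using sum_squares_bound[of "cmod a" "cmod b"] by (simp add: power2_sum)
    finally show ?thesis .
  qed
  have "summable (\<lambda>k. 2 * (cmod (h2_coeff f k))\<^sup>2 + 2 * (cmod (h2_coeff g k))\<^sup>2)"
    using f g by (intro summable_add summable_mult H2_summable_coeff_square)
  then have "summable (\<lambda>k. (cmod (h2_coeff (f - g) k))\<^sup>2)"
    by (rule summable_comparison_test[rotated]) (simp add: coeff_diff bound)
  moreover have "(f - g) holomorphic_on ball 0 1"
    unfolding fun_diff_def using hf hg by (rule holomorphic_on_diff)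
  ultimately show ?thesis
    using f g by (simp add: H2_def)
qed

lemma W_diff: "W n (f - g) = W n f - W n g"
  by (simp add: W_def fun_diff_def fun_eq_iff algebra_simps)

lemma H2_coeff_square_div_sums:
  assumes "0 < n" and "g \<in> H2"
  shows "(\<lambda>k. (cmod (h2_coeff g (k div n)))\<^sup>2) sums (of_nat n * (\<Sum>m. (cmod (h2_coeff g m))\<^sup>2))"
  using assms by (intro sums_div_nat) (simp_all add: summable_sums H2_summable_coeff_square)

lemma h2_coeff_W:
  assumes "0 < n" and g: "g \<in> H2"
  shows "h2_coeff (W n g) k = h2_coeff g (k div n)"
proof -
  define d where "d k = h2_coeff g (k div n)" for k
  have summable_d: "summable (\<lambda>k. (cmod (d k))\<^sup>2)"
    unfolding d_def using H2_coeff_square_div_sums[OF assms] by (rule sums_summable)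
  have "W n g has_fps_expansion Abs_fps d"
  proof (rule has_fps_expansionI)
    have "\<forall>\<^sub>F u in nhds 0. u \<in> ball (0::complex) 1"
      by (intro eventually_nhds_in_open) auto
    then show "\<forall>\<^sub>F u in nhds 0. (\<lambda>k. fps_nth (Abs_fps d) k * u ^ k) sums W n g u"
    proof eventually_elim
      case (elim u)
      then have "norm u < 1"
        by simp
      then have "norm (u ^ n) < 1"
        using \<open>0 < n\<close> by (simp add: norm_power power_less_one_iff)
      moreover have "summable (\<lambda>k. d k * u ^ k)"
        using summable_norm_mult_geometric[OF summable_d \<open>norm u < 1\<close>]
        by (rule summable_norm_cancel)
      ultimately show ?case
        using sums_power_series_div[OF \<open>0 < n\<close> H2_power_series[OF g]]
        by (simp add: W_def d_def)
    qed
  qed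
  then show ?thesis
    using fps_nth_fps_expansion[of "W n g" "Abs_fps d" k] by (simp add: h2_coeff_def d_def)
qed

lemma h2_coeff_square_W_sums:
  assumes "0 < n" and "g \<in> H2"
  shows "(\<lambda>k. (cmod (h2_coeff (W n g) k))\<^sup>2) sums (of_nat n * (\<Sum>m. (cmod (h2_coeff g m))\<^sup>2))"
  unfolding h2_coeff_W[OF assms] using assms by (rule H2_coeff_square_div_sums)

lemma W_in_H2:
  assumes "0 < n" and g: "g \<in> H2"
  shows "W n g \<in> H2"
proof -
  have hg: "g holomorphic_on ball 0 1" and vanish: "\<And>z. z \<notin> ball 0 1 \<Longrightarrow> g z = 0"
    using g by (auto simp: H2_def)
  have "(\<lambda>z. z ^ n) ` ball 0 1 \<subseteq> ball (0::complex) 1"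
    using \<open>0 < n\<close> by (auto simp: norm_power power_less_one_iff)
  then have "(g \<circ> (\<lambda>z. z ^ n)) holomorphic_on ball 0 1"
    by (intro holomorphic_on_compose_gen[OF _ hg]) (auto intro: holomorphic_intros)
  then have "W n g holomorphic_on ball 0 1"
    unfolding W_def by (intro holomorphic_intros) (simp add: o_def)
  moreover have "W n g z = 0" if "z \<notin> ball 0 1" for z
  proof -
    have "1 \<le> cmod (z ^ n)"
      using that by (simp add: norm_power one_le_power)
    then show ?thesis
      by (simp add: W_def vanish)
  qed
  ultimately show ?thesis
    using h2_coeff_square_W_sums[OF assms] by (auto simp: H2_def sums_iff)
qed

lemma h2_norm_W:
  assumes "0 < n" and "g \<in> H2"
  shows "h2_norm (W n g) = sqrt (real n) * h2_norm g"
  using h2_coeff_square_W_sums[OF assms] by (simp add: h2_norm_def sums_iff real_sqrt_mult)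

theorem mainTheorem4:
  fixes n :: nat
  assumes "n \<ge> 1"
  shows "\<not> li_yorke_chaotic H2 h2_norm (W n)"
proof (rule expansive_not_li_yorke_chaotic)
  have "0 < n"
    using assms by simp
  show "x - y \<in> H2" if "x \<in> H2" "y \<in> H2" for x y
    using that by (rule H2_diff)
  show "W n x \<in> H2" if "x \<in> H2" for x
    using \<open>0 < n\<close> that by (rule W_in_H2)
  show "W n (x - y) = W n x - W n y" for x y
    by (rule W_diff)
  show "h2_norm x \<le> h2_norm (W n x)" if "x \<in> H2" for x
  proof -
    have "1 \<le> sqrt (real n)"
      using assms by simp
    then show ?thesis
      using h2_norm_nonneg[OF that] by (simp add: h2_norm_W[OF \<open>0 < n\<close> that] mult_le_cancel_right1)
  qed
qed

end
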